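(* Let $a<b$, $\lambda>0$, let $H(y):=\tfrac12\left(\tfrac12 y^2-\lambda\right)^2$ for $y\in\mathbb{R}$, let $\theta\in C[a,b]$ with $\min_{[a,b]}\theta>0$, and let $F\in C^1[a,b]$ with $F(a)=F(b)=0$, $F(x)\neq0$ for $x\in(a,b)$ and $\|F\|_\infty<(2\lambda/3)^{3/2}$. Let $X:=C_0[a,b]:=\{v\in C[a,b]\mid v(a)=v(b)=0\}$ and $K:X\to\mathbb{R}$, $K(v):=\int_a^b\theta\cdot(H\circ v-Fv)$. For $A\in\left(-(2\lambda/3)^{3/2},(2\lambda/3)^{3/2}\right)$ let $z_2(A)$ denote the unique solution in $\left(-\sqrt{2\lambda/3},\sqrt{2\lambda/3}\right)$ of $z\left(\tfrac12z^2-\lambda\right)=A$, and let $\overline v:=z_2\circ F$ (the unique stationary point of $K$). Then $\overline v$ is a local maximizer of $K$ with respect to the norm $\|\cdot\|_\infty$ on $X$, and $\overline v$ is not a local extremum point (neither local minimizer nor local maximizer) of $K$ with respect to the norm $\|\cdot\|_p$ on $X$ for any $p\in[1,4)$.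
   Context: $\|\cdot\|_p$ denotes the $L^p(a,b)$-norm restricted to $X$; $\|\cdot\|_\infty$ is the supremum norm. A stationary point of $K$ is a $v\in X$ with $\int_a^b\theta\left[v\left(\tfrac12v^2-\lambda\right)-F\right]h=0$ for all $h\in X$. *)

theory Defs
  imports "HOL-Analysis.Analysis"
begin

definition H :: "real \<Rightarrow> real \<Rightarrow> real" where
  "H lam y = (1/2) * ((1/2) * y^2 - lam)^2"

text \<open>The space X = C_0[a,b] (functions are real => real; only values on [a,b] matter).\<close>
definition C0 :: "real \<Rightarrow> real \<Rightarrow> (real \<Rightarrow> real) set" where
  "C0 a b = {v. continuous_on {a..b} v \<and> v a = 0 \<and> v b = 0}"

definition supnorm :: "real \<Rightarrow> real \<Rightarrow> (real \<Rightarrow> real) \<Rightarrow> real" where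
  "supnorm a b f = (SUP x\<in>{a..b}. \<bar>f x\<bar>)"

definition lpnorm :: "real \<Rightarrow> real \<Rightarrow> real \<Rightarrow> (real \<Rightarrow> real) \<Rightarrow> real" where
  "lpnorm a b p f = (integral {a..b} (\<lambda>x. \<bar>f x\<bar> powr p)) powr (1/p)"

definition Kfun :: "real \<Rightarrow> real \<Rightarrow> real \<Rightarrow> (real \<Rightarrow> real) \<Rightarrow> (real \<Rightarrow> real) \<Rightarrow> (real \<Rightarrow> real) \<Rightarrow> real" where
  "Kfun a b lam \<theta> F v = integral {a..b} (\<lambda>x. \<theta> x * (H lam (v x) - F x * v x))"

definition z2 :: "real \<Rightarrow> real \<Rightarrow> real" where
  "z2 lam A = (THE z. z \<in> {- sqrt (2*lam/3) <..< sqrt (2*lam/3)} \<and> z * ((1/2) * z^2 - lam) = A)"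

definition local_max_wrt :: "('a \<Rightarrow> real) set \<Rightarrow> (('a \<Rightarrow> real) \<Rightarrow> real) \<Rightarrow> (('a \<Rightarrow> real) \<Rightarrow> real) \<Rightarrow> ('a \<Rightarrow> real) \<Rightarrow> bool" where
  "local_max_wrt S N J u \<longleftrightarrow> u \<in> S \<and> (\<exists>\<epsilon>>0. \<forall>v\<in>S. N (\<lambda>x. v x - u x) < \<epsilon> \<longrightarrow> J v \<le> J u)"

definition local_min_wrt :: "('a \<Rightarrow> real) set \<Rightarrow> (('a \<Rightarrow> real) \<Rightarrow> real) \<Rightarrow> (('a \<Rightarrow> real) \<Rightarrow> real) \<Rightarrow> ('a \<Rightarrow> real) \<Rightarrow> bool" where
  "local_min_wrt S N J u \<longleftrightarrow> u \<in> S \<and> (\<exists>\<epsilon>>0. \<forall>v\<in>S. N (\<lambda>x. v x - u x) < \<epsilon> \<longrightarrow> J u \<le> J v)"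

end

theory Submission
  imports Defs
begin

text \<open>
  Write \<open>s = sqrt (2 lam / 3)\<close>. The derivative \<open>dH lam y = y (y\<^sup>2/2 - lam)\<close> of \<open>H lam\<close> decreases
  strictly from \<open>s\<^sup>3\<close> to \<open>-s\<^sup>3\<close> on \<open>[-s, s]\<close>, so \<open>u = z2 lam \<circ> F\<close> solves \<open>dH lam (u x) = F x\<close>
  pointwise and takes values in \<open>[-r, r]\<close> for some \<open>r < s\<close>. As \<open>H lam\<close> is quartic, its Taylor
  expansion at \<open>u x\<close> is exact, which gives
  \<open>K v - K u = \<integral> \<theta> (v - u)\<^sup>2 Q(v, u)\<close> with \<open>Q(y, z) = (y + z)\<^sup>2/8 + z\<^sup>2/4 - lam/2\<close> (\<open>Hquot\<close>).
  Now \<open>Q(y, u x)\<close> stays below a negative constant as long as \<open>|y - u x| \<le> s - r\<close>: this gives the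
  local maximum for the supremum norm, and adding a small bump to \<open>u\<close> shows that \<open>u\<close> is no local
  minimum for any \<open>L\<^sup>p\<close> norm. A bump of fixed large height \<open>h\<close> on an interval of length about \<open>d\<close>
  makes \<open>Q\<close> of order \<open>h\<^sup>2\<close> there and raises \<open>K\<close> by a positive multiple of \<open>d\<close>, while its
  \<open>L\<^sup>p\<close> distance to \<open>u\<close> is \<open>O(h d\<^sup>1\<^sup>/\<^sup>p)\<close>; letting \<open>d \<rightarrow> 0\<close> shows that \<open>u\<close> is no \<open>L\<^sup>p\<close> local
  maximum either.
\<close>

definition dH :: "real \<Rightarrow> real \<Rightarrow> real" where
  "dH lam z = z * ((1/2) * z^2 - lam)"

definition dH_crit :: "real \<Rightarrow> real" where
  "dH_crit lam = sqrt (2*lam/3)"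

lemma dH_crit_pos: "lam > 0 \<Longrightarrow> dH_crit lam > 0"
  unfolding dH_crit_def by simp

lemma dH_crit_sq: "lam \<ge> 0 \<Longrightarrow> dH_crit lam ^ 2 = 2*lam/3"
  unfolding dH_crit_def by simp

lemma dH_strict_antimono:
  assumes "lam > 0" "- dH_crit lam \<le> y" "y < z" "z \<le> dH_crit lam"
  shows "dH lam z < dH lam y"
proof -
  have factor: "dH lam z - dH lam y = (z - y) * ((y^2 + y*z + z^2)/2 - lam)"
    unfolding dH_def by (simp add: field_simps power2_eq_square)
  have "\<bar>y\<bar> \<le> dH_crit lam" "\<bar>z\<bar> \<le> dH_crit lam"
    using assms by auto
  then have "y^2 \<le> 2*lam/3" "z^2 \<le> 2*lam/3"
    using dH_crit_sq[of lam] assms(1) abs_le_square_iff[of _ "dH_crit lam"] by auto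
  moreover have "y*z < (y^2 + z^2)/2"
  proof -
    have "0 < (y - z)^2"
      using assms(3) by simp
    then show ?thesis
      unfolding power2_diff by (simp add: field_simps)
  qed
  ultimately have "(y^2 + y*z + z^2)/2 - lam < 0"
    by (simp add: field_simps)
  with assms(3) have "(z - y) * ((y^2 + y*z + z^2)/2 - lam) < 0"
    by (intro mult_pos_neg) auto
  with factor show ?thesis
    by simp
qed

lemma dH_inj:
  assumes "lam > 0" "\<bar>y\<bar> \<le> dH_crit lam" "\<bar>z\<bar> \<le> dH_crit lam" "dH lam y = dH lam z"
  shows "y = z"
  using dH_strict_antimono[of lam y z] dH_strict_antimono[of lam z y] assms
  by (cases y z rule: linorder_cases) (auto simp: abs_le_iff)

lemma dH_at_crit:
  assumes "lam > 0"
  shows "dH lam (dH_crit lam) = - (dH_crit lam ^ 3)"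
    and "dH lam (- dH_crit lam) = dH_crit lam ^ 3"
proof -
  have "(1/2) * dH_crit lam ^ 2 - lam = - (dH_crit lam ^ 2)"
    using dH_crit_sq[of lam] assms by simp
  then show "dH lam (dH_crit lam) = - (dH_crit lam ^ 3)" "dH lam (- dH_crit lam) = dH_crit lam ^ 3"
    unfolding dH_def by (simp_all add: power2_eq_square power3_eq_cube)
qed

lemma powr_three_halves: "x \<ge> 0 \<Longrightarrow> x powr (3/2) = sqrt x ^ 3"
proof -
  assume "x \<ge> 0"
  have "x powr (3/2) = x powr (1 + 1/2)"
    by simp
  also have "\<dots> = x powr 1 * x powr (1/2)"
    by (rule powr_add)
  also have "\<dots> = sqrt x ^ 3"
    using \<open>x \<ge> 0\<close> by (simp add: powr_half_sqrt power3_eq_cube)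
  finally show ?thesis .
qed

lemma z2_solves:
  assumes lam: "lam > 0" and c: "\<bar>c\<bar> < dH_crit lam ^ 3"
  shows "\<bar>z2 lam c\<bar> < dH_crit lam" and "dH lam (z2 lam c) = c"
proof -
  let ?s = "dH_crit lam"
  have "dH lam ?s \<le> c" "c \<le> dH lam (-?s)" "-?s \<le> ?s"
    using dH_at_crit[OF lam] c dH_crit_pos[OF lam] by (auto simp: abs_less_iff)
  moreover have "\<forall>x. -?s \<le> x \<and> x \<le> ?s \<longrightarrow> isCont (dH lam) x"
    unfolding dH_def by (auto intro!: continuous_intros)
  ultimately obtain z where z: "-?s \<le> z" "z \<le> ?s" "dH lam z = c"
    using IVT2[of "dH lam" ?s c "-?s"] by auto
  moreover have "z \<noteq> ?s" "z \<noteq> -?s"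
    using z(3) dH_at_crit[OF lam] c by auto
  ultimately have "\<bar>z\<bar> < ?s"
    by (simp add: abs_less_iff)
  have "\<exists>!z. z \<in> {-?s<..<?s} \<and> dH lam z = c"
  proof (rule ex1I[of _ z])
    show "z \<in> {-?s<..<?s} \<and> dH lam z = c"
      using \<open>\<bar>z\<bar> < ?s\<close> z(3) by (simp add: abs_less_iff)
  next
    fix y assume y: "y \<in> {-?s<..<?s} \<and> dH lam y = c"
    then have "\<bar>y\<bar> \<le> ?s"
      by auto
    with y \<open>\<bar>z\<bar> < ?s\<close> z(3) show "y = z"
      using dH_inj[OF lam, of y z] by simp
  qed
  then have "z2 lam c \<in> {-?s<..<?s} \<and> dH lam (z2 lam c) = c"
    unfolding z2_def dH_def[symmetric] dH_crit_def[symmetric] by (rule theI')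
  then show "\<bar>z2 lam c\<bar> < ?s" "dH lam (z2 lam c) = c"
    by (simp_all add: abs_less_iff)
qed

lemma z2_dH:
  assumes lam: "lam > 0" and z: "\<bar>z\<bar> < dH_crit lam"
  shows "z2 lam (dH lam z) = z"
proof -
  let ?s = "dH_crit lam"
  have "dH lam ?s < dH lam z" "dH lam z < dH lam (-?s)"
    using dH_strict_antimono[OF lam, of z ?s] dH_strict_antimono[OF lam, of "-?s" z] z by auto
  then have "\<bar>dH lam z\<bar> < ?s ^ 3"
    using dH_at_crit[OF lam] by auto
  then show ?thesis
    using z2_solves[OF lam] dH_inj[OF lam, of "z2 lam (dH lam z)" z] z by fastforce
qed

lemma isCont_z2:
  assumes lam: "lam > 0" and c: "\<bar>c\<bar> < dH_crit lam ^ 3"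
  shows "isCont (z2 lam) c"
proof -
  define z where "z = z2 lam c"
  have z: "\<bar>z\<bar> < dH_crit lam" "dH lam z = c"
    using z2_solves[OF lam c] unfolding z_def by auto
  define d where "d = (dH_crit lam - \<bar>z\<bar>) / 2"
  have inverse: "z2 lam (dH lam w) = w" if "\<bar>w - z\<bar> \<le> d" for w
  proof (rule z2_dH[OF lam])
    have "2 * \<bar>w - z\<bar> \<le> dH_crit lam - \<bar>z\<bar>"
      using that unfolding d_def by simp
    with z(1) show "\<bar>w\<bar> < dH_crit lam"
      by (auto simp: abs_if split: if_splits)
  qed
  have "0 < d"
    using z(1) unfolding d_def by simp
  moreover have "isCont (dH lam) w" for w
    unfolding dH_def by (intro continuous_intros)
  ultimately have "isCont (z2 lam) (dH lam z)"
    using isCont_inverse_function[of d z "z2 lam" "dH lam"] inverse by blast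
  then show ?thesis
    using z(2) by simp
qed

text \<open>The exact second-order Taylor coefficient of the quartic \<open>H lam\<close>, see \<open>H_expansion\<close>.\<close>

definition Hquot :: "real \<Rightarrow> real \<Rightarrow> real \<Rightarrow> real" where
  "Hquot lam y z = (y + z)^2/8 + z^2/4 - lam/2"

lemma H_expansion: "H lam y - H lam z - dH lam z * (y - z) = (y - z)^2 * Hquot lam y z"
  unfolding H_def dH_def Hquot_def by (simp add: field_simps power2_eq_square)

lemma Hquot_ge: "- lam/2 \<le> Hquot lam y z"
  unfolding Hquot_def by simp

lemma Hquot_ge_far:
  assumes "\<bar>z\<bar> \<le> s" "2 * s \<le> y - z"
  shows "(y - z - 2 * s)^2/8 - lam/2 \<le> Hquot lam y z"
proof -
  have "(y - z - 2 * s)^2 \<le> (y + z)^2"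
    using assms by (intro power_mono) auto
  moreover have "0 \<le> z^2"
    by simp
  ultimately show ?thesis
    unfolding Hquot_def by linarith
qed

lemma Kfun_diff_at_stationary:
  assumes "continuous_on {a..b} \<theta>" "continuous_on {a..b} F"
    and "continuous_on {a..b} u" "continuous_on {a..b} v"
    and stationary: "\<And>x. x \<in> {a..b} \<Longrightarrow> dH lam (u x) = F x"
  shows "Kfun a b lam \<theta> F v - Kfun a b lam \<theta> F u
           = integral {a..b} (\<lambda>x. \<theta> x * ((v x - u x)^2 * Hquot lam (v x) (u x)))"
proof -
  have "(\<lambda>x. \<theta> x * (H lam (w x) - F x * w x)) integrable_on {a..b}"
    if "continuous_on {a..b} w" for w
    using assms that unfolding H_def by (intro integrable_continuous_interval continuous_intros)
  then have "Kfun a b lam \<theta> F v - Kfun a b lam \<theta> F u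
      = integral {a..b} (\<lambda>x. \<theta> x * (H lam (v x) - F x * v x) - \<theta> x * (H lam (u x) - F x * u x))"
    unfolding Kfun_def using assms by (simp add: integral_diff)
  also have "\<dots> = integral {a..b} (\<lambda>x. \<theta> x * ((v x - u x)^2 * Hquot lam (v x) (u x)))"
  proof (rule integral_cong)
    fix x assume "x \<in> {a..b}"
    then have "(H lam (v x) - F x * v x) - (H lam (u x) - F x * u x)
        = (v x - u x)^2 * Hquot lam (v x) (u x)"
      using H_expansion[of lam "v x" "u x"] stationary[of x] by (simp add: algebra_simps)
    then show "\<theta> x * (H lam (v x) - F x * v x) - \<theta> x * (H lam (u x) - F x * u x)
        = \<theta> x * ((v x - u x)^2 * Hquot lam (v x) (u x))"
      by (metis right_diff_distrib)
  qed
  finally show ?thesis .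
qed

lemma has_integral_const_on_subinterval:
  fixes A :: real
  assumes "a \<le> l" "r \<le> b" "l \<le> r"
  shows "((\<lambda>x. if x \<in> {l..r} then A else 0) has_integral A * (r - l)) {a..b}"
proof -
  have sub: "{l..r} \<inter> {a..b} = {l..r}"
    using assms by auto
  show ?thesis
    unfolding has_integral_restrict_Int sub using has_integral_const_real[of A l r] assms
    by (simp add: mult.commute)
qed

lemma integral_le_neg_on_plateau:
  fixes f :: "real \<Rightarrow> real"
  assumes f: "f integrable_on {a..b}" and "a \<le> c - d" "c + d \<le> b" "0 \<le> d"
    and nonpos: "\<And>x. x \<in> {a..b} \<Longrightarrow> f x \<le> 0"
    and plateau: "\<And>x. x \<in> {a..b} \<Longrightarrow> \<bar>x - c\<bar> \<le> d \<Longrightarrow> f x \<le> - A"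
  shows "integral {a..b} f \<le> - 2 * d * A"
proof -
  have step: "((\<lambda>x. if x \<in> {c-d..c+d} then - A else 0) has_integral - 2 * d * A) {a..b}"
    using has_integral_const_on_subinterval[of a "c - d" "c + d" b "- A"] assms
    by (simp add: algebra_simps)
  show ?thesis
    by (rule has_integral_le[OF integrable_integral[OF f] step])
       (auto simp: abs_le_iff nonpos plateau)
qed

lemma integral_ge_on_plateau:
  fixes f :: "real \<Rightarrow> real"
  assumes f: "f integrable_on {a..b}" and "a \<le> c - 2 * d" "c + 2 * d \<le> b" "0 \<le> d" "0 \<le> B"
    and plateau: "\<And>x. x \<in> {a..b} \<Longrightarrow> \<bar>x - c\<bar> \<le> d \<Longrightarrow> A \<le> f x"
    and band: "\<And>x. x \<in> {a..b} \<Longrightarrow> \<bar>x - c\<bar> \<le> 2 * d \<Longrightarrow> - B \<le> f x"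
    and outside: "\<And>x. x \<in> {a..b} \<Longrightarrow> 2 * d \<le> \<bar>x - c\<bar> \<Longrightarrow> 0 \<le> f x"
  shows "2 * d * (A - 2 * B) \<le> integral {a..b} f"
proof -
  have "((\<lambda>x. (if x \<in> {c-d..c+d} then A else 0) - (if x \<in> {c-2*d..c+2*d} then B else 0))
          has_integral A * (2 * d) - B * (4 * d)) {a..b}"
    using has_integral_diff[OF has_integral_const_on_subinterval[of a "c - d" "c + d" b A]
        has_integral_const_on_subinterval[of a "c - 2*d" "c + 2*d" b B]] assms by simp
  moreover have "(if x \<in> {c-d..c+d} then A else 0) - (if x \<in> {c-2*d..c+2*d} then B else 0) \<le> f x"
    if x: "x \<in> {a..b}" for x
    using plateau[OF x] band[OF x] outside[OF x] \<open>0 \<le> B\<close> \<open>0 \<le> d\<close>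
    by (auto simp: abs_le_iff)
  ultimately have "A * (2 * d) - B * (4 * d) \<le> integral {a..b} f"
    by (intro has_integral_le[OF _ integrable_integral[OF f]])
  then show ?thesis
    by (simp add: algebra_simps)
qed

lemma abs_le_supnorm:
  assumes "continuous_on {a..b} f" "x \<in> {a..b}"
  shows "\<bar>f x\<bar> \<le> supnorm a b f"
proof -
  have "compact ((\<lambda>x. \<bar>f x\<bar>) ` {a..b})"
    by (intro compact_continuous_image continuous_intros assms(1)) simp
  then have "bdd_above ((\<lambda>x. \<bar>f x\<bar>) ` {a..b})"
    by (intro bounded_imp_bdd_above compact_imp_bounded)
  then show ?thesis
    unfolding supnorm_def using assms(2) by (rule cSUP_upper2) simp
qed

lemma lpnorm_le_of_support:
  assumes p: "p > 0" and f: "continuous_on {a..b} f" and "a \<le> l" "r \<le> b" "l \<le> r"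
    and bound: "\<And>x. x \<in> {a..b} \<Longrightarrow> \<bar>f x\<bar> \<le> h"
    and support: "\<And>x. x \<in> {a..b} \<Longrightarrow> x \<notin> {l..r} \<Longrightarrow> f x = 0"
  shows "lpnorm a b p f \<le> h * (r - l) powr (1/p)"
proof -
  let ?I = "integral {a..b} (\<lambda>x. \<bar>f x\<bar> powr p)"
  have "h \<ge> 0"
    using bound[of a] assms by (meson abs_ge_zero atLeastAtMost_iff order_trans)
  have "continuous_on {a..b} (\<lambda>x. \<bar>f x\<bar> powr p)"
    using f p by (intro continuous_on_powr' continuous_intros) auto
  then have integrable: "(\<lambda>x. \<bar>f x\<bar> powr p) integrable_on {a..b}"
    by (rule integrable_continuous_interval)
  have "?I \<le> h powr p * (r - l)"
  proof (rule has_integral_le[OF integrable_integral[OF integrable]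
                                 has_integral_const_on_subinterval[OF assms(3-5)]])
    fix x assume x: "x \<in> {a..b}"
    show "\<bar>f x\<bar> powr p \<le> (if x \<in> {l..r} then h powr p else 0)"
      using bound[OF x] support[OF x] p by (simp add: powr_mono2)
  qed
  moreover have "0 \<le> ?I"
    by (rule integral_nonneg[OF integrable]) simp
  ultimately have "?I powr (1/p) \<le> (h powr p * (r - l)) powr (1/p)"
    using p by (intro powr_mono2) auto
  also have "\<dots> = h * (r - l) powr (1/p)"
    using p \<open>h \<ge> 0\<close> \<open>l \<le> r\<close> by (simp add: powr_mult powr_powr)
  finally show ?thesis
    unfolding lpnorm_def .
qed

definition bump :: "real \<Rightarrow> real \<Rightarrow> real \<Rightarrow> real" where
  "bump c d x = min 1 (max 0 (2 - \<bar>x - c\<bar> / d))"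

lemma bump_nonneg: "0 \<le> bump c d x"
  and bump_le_one: "bump c d x \<le> 1"
  unfolding bump_def by auto

lemma bump_eq_one: "0 < d \<Longrightarrow> \<bar>x - c\<bar> \<le> d \<Longrightarrow> bump c d x = 1"
  unfolding bump_def by (simp add: field_simps)

lemma bump_eq_zero: "0 < d \<Longrightarrow> 2 * d \<le> \<bar>x - c\<bar> \<Longrightarrow> bump c d x = 0"
  unfolding bump_def by (simp add: field_simps)

lemma continuous_on_bump: "0 < d \<Longrightarrow> continuous_on S (bump c d)"
  unfolding bump_def by (intro continuous_intros) auto

lemma bump_perturbation:
  assumes d: "0 < d" "a \<le> c - 2 * d" "c + 2 * d \<le> b"
    and "0 \<le> t" "0 < p" and u: "u \<in> C0 a b"
  shows "(\<lambda>x. u x + t * bump c d x) \<in> C0 a b"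
    and "lpnorm a b p (\<lambda>x. (u x + t * bump c d x) - u x) \<le> t * (4 * d) powr (1/p)"
proof -
  have "bump c d a = 0" "bump c d b = 0"
    using d by (auto intro!: bump_eq_zero)
  then show "(\<lambda>x. u x + t * bump c d x) \<in> C0 a b"
    using u d(1) unfolding C0_def by (auto intro!: continuous_intros continuous_on_bump)
  have "lpnorm a b p (\<lambda>x. t * bump c d x) \<le> t * ((c + 2 * d) - (c - 2 * d)) powr (1/p)"
  proof (rule lpnorm_le_of_support)
    fix x
    show "\<bar>t * bump c d x\<bar> \<le> t"
      using \<open>0 \<le> t\<close> bump_nonneg[of c d x] bump_le_one[of c d x]
      by (simp add: abs_mult mult_left_le)
    assume "x \<notin> {c - 2 * d..c + 2 * d}"
    then have "2 * d \<le> \<bar>x - c\<bar>"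
      by auto
    then show "t * bump c d x = 0"
      using bump_eq_zero[OF d(1)] by simp
  qed (use assms in \<open>auto intro!: continuous_intros continuous_on_bump\<close>)
  then show "lpnorm a b p (\<lambda>x. (u x + t * bump c d x) - u x) \<le> t * (4 * d) powr (1/p)"
    by simp
qed

text \<open>Height of the tall bump: the gain \<open>m h\<^sup>2 ((h - 2 s)\<^sup>2/8 - lam/2)\<close> on its plateau beats the
  loss \<open>M h\<^sup>2 lam/2\<close> on its twice as wide support.\<close>

lemma tall_height_exists:
  fixes m M lam s :: real
  assumes "0 < m" "m \<le> M" "0 < lam" "0 \<le> s"
  obtains h where "2 * s < h" "lam \<le> (h - 2 * s)^2/4"
    and "M * lam < m * ((h - 2 * s)^2/8 - lam/2)"
proof -
  define k where "k = 8 * M * lam / m + 4 * lam + 1"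
  have "1 \<le> k"
    unfolding k_def using assms by simp
  then have "k * 1 \<le> k * k"
    by (intro mult_left_mono) auto
  then have "8 * M * lam / m + 4 * lam < k^2"
    unfolding k_def power2_eq_square by simp
  moreover have "0 \<le> 8 * M * lam / m"
    using assms by simp
  ultimately have "lam \<le> k^2/4" "M * lam < m * (k^2/8 - lam/2)"
    using assms(1) by (linarith, simp add: field_simps)
  with \<open>1 \<le> k\<close> show ?thesis
    using that[of "2 * s + k"] by simp
qed

locale stationary_point =
  fixes a b lam r :: real and \<theta> F u :: "real \<Rightarrow> real"
  assumes a_less_b: "a < b" and lam_pos: "0 < lam"
    and theta_cont: "continuous_on {a..b} \<theta>" and theta_pos: "\<And>x. x \<in> {a..b} \<Longrightarrow> 0 < \<theta> x"
    and F_cont: "continuous_on {a..b} F"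
    and u_C0: "u \<in> C0 a b"
    and u_stationary: "\<And>x. x \<in> {a..b} \<Longrightarrow> dH lam (u x) = F x"
    and u_bounded: "\<And>x. x \<in> {a..b} \<Longrightarrow> \<bar>u x\<bar> \<le> r"
    and r_less: "r < dH_crit lam"
begin

abbreviation K :: "(real \<Rightarrow> real) \<Rightarrow> real" where
  "K \<equiv> Kfun a b lam \<theta> F"

lemma r_nonneg: "0 \<le> r"
  using u_bounded[of a] a_less_b by force

lemma u_cont: "continuous_on {a..b} u"
  using u_C0 unfolding C0_def by simp

definition excess :: "(real \<Rightarrow> real) \<Rightarrow> real \<Rightarrow> real" where
  "excess v x = \<theta> x * ((v x - u x)^2 * Hquot lam (v x) (u x))"

lemma K_diff: "continuous_on {a..b} v \<Longrightarrow> K v - K u = integral {a..b} (excess v)"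
  unfolding excess_def by (rule Kfun_diff_at_stationary[OF theta_cont F_cont u_cont _ u_stationary])

lemma excess_integrable: "continuous_on {a..b} v \<Longrightarrow> excess v integrable_on {a..b}"
  unfolding excess_def Hquot_def using theta_cont u_cont
  by (intro integrable_continuous_interval continuous_intros) auto

lemma theta_bounds:
  obtains m M where "0 < m" "\<And>x. x \<in> {a..b} \<Longrightarrow> m \<le> \<theta> x \<and> \<theta> x \<le> M"
proof -
  obtain x1 where "x1 \<in> {a..b}" "\<forall>y\<in>{a..b}. \<theta> x1 \<le> \<theta> y"
    using continuous_attains_inf[OF compact_Icc _ theta_cont] a_less_b by auto
  moreover obtain x2 where "\<forall>y\<in>{a..b}. \<theta> y \<le> \<theta> x2"
    using continuous_attains_sup[OF compact_Icc _ theta_cont] a_less_b by auto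
  ultimately show ?thesis
    using that[of "\<theta> x1" "\<theta> x2"] theta_pos by blast
qed

definition margin :: real where
  "margin = lam/2 - (r + dH_crit lam)^2/8 - r^2/4"

lemma margin_pos: "0 < margin"
proof -
  have "(r + dH_crit lam)^2 < (2 * dH_crit lam)^2"
    using r_nonneg r_less by (intro power_strict_mono) auto
  moreover have "r^2 \<le> dH_crit lam ^ 2"
    using r_nonneg r_less by (intro power_mono) auto
  ultimately show ?thesis
    unfolding margin_def using dH_crit_sq[of lam] lam_pos by (simp add: power_mult_distrib)
qed

lemma Hquot_le_neg_margin:
  assumes x: "x \<in> {a..b}" and y: "\<bar>y - u x\<bar> \<le> dH_crit lam - r"
  shows "Hquot lam y (u x) \<le> - margin"
proof -
  have "\<bar>y + u x\<bar> \<le> r + dH_crit lam"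
    using y u_bounded[OF x] by (auto simp: abs_if split: if_splits)
  then have "(y + u x)^2 \<le> (r + dH_crit lam)^2" "(u x)^2 \<le> r^2"
    using u_bounded[OF x] r_nonneg r_less by (simp_all add: power2_le_iff_abs_le)
  then show ?thesis
    unfolding Hquot_def margin_def by simp
qed

lemma local_max_supnorm: "local_max_wrt (C0 a b) (supnorm a b) K u"
  unfolding local_max_wrt_def
proof (intro conjI exI[of _ "dH_crit lam - r"] ballI impI)
  show "u \<in> C0 a b" "0 < dH_crit lam - r"
    using u_C0 r_less by auto
  fix v assume v: "v \<in> C0 a b" "supnorm a b (\<lambda>x. v x - u x) < dH_crit lam - r"
  have v_cont: "continuous_on {a..b} v"
    using v(1) unfolding C0_def by simp
  have "excess v x \<le> 0" if x: "x \<in> {a..b}" for x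
  proof -
    have "\<bar>v x - u x\<bar> \<le> dH_crit lam - r"
      using abs_le_supnorm[OF _ x, of "\<lambda>x. v x - u x"] v_cont u_cont v(2)
      by (fastforce intro: continuous_intros)
    then have "Hquot lam (v x) (u x) \<le> 0"
      using Hquot_le_neg_margin[OF x] margin_pos by fastforce
    then show ?thesis
      unfolding excess_def using theta_pos[OF x] by (simp add: mult_nonneg_nonpos)
  qed
  then have "integral {a..b} (excess v) \<le> 0"
    using integral_le[OF excess_integrable[OF v_cont] integrable_0] by simp
  then show "K v \<le> K u"
    using K_diff[OF v_cont] by simp
qed

lemma small_bump_decreases_K:
  assumes t: "0 < t" "t \<le> dH_crit lam - r"
    and d: "0 < d" "a \<le> c - 2 * d" "c + 2 * d \<le> b"
  shows "K (\<lambda>x. u x + t * bump c d x) < K u"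
proof -
  obtain m M where m: "0 < m" "\<And>x. x \<in> {a..b} \<Longrightarrow> m \<le> \<theta> x \<and> \<theta> x \<le> M"
    using theta_bounds by blast
  define v where "v = (\<lambda>x. u x + t * bump c d x)"
  have v_cont: "continuous_on {a..b} v"
    unfolding v_def using u_cont d(1) by (intro continuous_intros continuous_on_bump)
  have Hquot_v: "Hquot lam (v x) (u x) \<le> - margin" if x: "x \<in> {a..b}" for x
  proof (rule Hquot_le_neg_margin[OF x])
    have "\<bar>v x - u x\<bar> \<le> t"
      using t(1) bump_nonneg[of c d x] bump_le_one[of c d x] by (simp add: v_def mult_left_le)
    with t(2) show "\<bar>v x - u x\<bar> \<le> dH_crit lam - r"
      by linarith
  qed
  have "integral {a..b} (excess v) \<le> - 2 * d * (m * margin * t^2)"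
  proof (rule integral_le_neg_on_plateau[OF excess_integrable[OF v_cont]])
    fix x assume x: "x \<in> {a..b}"
    show "excess v x \<le> 0"
      unfolding excess_def using Hquot_v[OF x] margin_pos theta_pos[OF x]
      by (simp add: mult_nonneg_nonpos)
    assume "\<bar>x - c\<bar> \<le> d"
    then have "v x - u x = t"
      using bump_eq_one[OF d(1)] by (simp add: v_def)
    then have "excess v x = \<theta> x * (t^2 * Hquot lam (v x) (u x))"
      unfolding excess_def by simp
    also have "\<dots> \<le> \<theta> x * (t^2 * - margin)"
      using Hquot_v[OF x] theta_pos[OF x] by (intro mult_left_mono) auto
    also have "\<dots> \<le> m * (t^2 * - margin)"
      using m(2)[OF x] margin_pos by (intro mult_right_mono_neg) auto
    finally show "excess v x \<le> - (m * margin * t^2)"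
      by (simp add: algebra_simps)
  qed (use d in auto)
  also have "\<dots> < 0"
    using d(1) m(1) margin_pos t(1) by simp
  finally show ?thesis
    using K_diff[OF v_cont] unfolding v_def by simp
qed

lemma not_local_min_lpnorm:
  assumes p: "0 < p"
  shows "\<not> local_min_wrt (C0 a b) (lpnorm a b p) K u"
proof
  assume "local_min_wrt (C0 a b) (lpnorm a b p) K u"
  then obtain e where e: "0 < e"
    and min: "\<And>v. v \<in> C0 a b \<Longrightarrow> lpnorm a b p (\<lambda>x. v x - u x) < e \<Longrightarrow> K u \<le> K v"
    unfolding local_min_wrt_def by blast
  define d where "d = (b - a) / 8"
  define X where "X = (4 * d) powr (1/p)"
  define t where "t = min (dH_crit lam - r) (e / (2 * X))"
  have d: "0 < d" "a \<le> (a + b)/2 - 2 * d" "(a + b)/2 + 2 * d \<le> b"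
    using a_less_b unfolding d_def by (auto simp: field_simps)
  have "0 < X"
    using d(1) unfolding X_def by simp
  then have t: "0 < t" "t \<le> dH_crit lam - r" "t * X < e"
    using r_less e unfolding t_def by (auto simp: min_def field_simps)
  let ?v = "\<lambda>x. u x + t * bump ((a + b)/2) d x"
  have "lpnorm a b p (\<lambda>x. ?v x - u x) \<le> t * X"
    using bump_perturbation(2)[OF d _ p u_C0, of t] t(1) unfolding X_def by simp
  then have "K u \<le> K ?v"
    using min[OF bump_perturbation(1)[OF d _ p u_C0]] t by simp
  with small_bump_decreases_K[OF t(1,2) d] show False
    by simp
qed

lemma tall_bump_excess_bounds:
  fixes c d h :: real
  assumes x: "x \<in> {a..b}" and d: "0 < d" and h: "2 * dH_crit lam \<le> h"
    and m: "m \<le> \<theta> x" and M: "\<theta> x \<le> M"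
  defines "v \<equiv> \<lambda>x. u x + h * bump c d x"
  shows "- (M * h^2 * lam/2) \<le> excess v x"
    and "2 * d \<le> \<bar>x - c\<bar> \<Longrightarrow> excess v x = 0"
    and "\<bar>x - c\<bar> \<le> d \<Longrightarrow> lam \<le> (h - 2 * dH_crit lam)^2/4 \<Longrightarrow>
           m * h^2 * ((h - 2 * dH_crit lam)^2/8 - lam/2) \<le> excess v x"
proof -
  have "0 \<le> h"
    using h dH_crit_pos[OF lam_pos] by linarith
  then have "\<bar>v x - u x\<bar> \<le> h"
    using bump_nonneg[of c d x] bump_le_one[of c d x] by (simp add: v_def mult_left_le)
  then have "h^2 * - (lam/2) \<le> (v x - u x)^2 * - (lam/2)"
    using lam_pos \<open>0 \<le> h\<close> by (intro mult_right_mono_neg) (auto simp: power2_le_iff_abs_le)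
  also have "\<dots> \<le> (v x - u x)^2 * Hquot lam (v x) (u x)"
    using Hquot_ge by (intro mult_left_mono) auto
  finally have "\<theta> x * (h^2 * - (lam/2)) \<le> excess v x"
    unfolding excess_def using theta_pos[OF x] by (intro mult_left_mono) auto
  moreover have "M * (h^2 * - (lam/2)) \<le> \<theta> x * (h^2 * - (lam/2))"
    using M lam_pos by (intro mult_right_mono_neg) auto
  ultimately show "- (M * h^2 * lam/2) \<le> excess v x"
    by simp
  show "2 * d \<le> \<bar>x - c\<bar> \<Longrightarrow> excess v x = 0"
    using bump_eq_zero[OF d] by (simp add: excess_def v_def)
  assume "\<bar>x - c\<bar> \<le> d" "lam \<le> (h - 2 * dH_crit lam)^2/4"
  then have "v x - u x = h"
    using bump_eq_one[OF d] by (simp add: v_def)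
  then have "excess v x = \<theta> x * (h^2 * Hquot lam (v x) (u x))"
    unfolding excess_def by simp
  moreover have "(h - 2 * dH_crit lam)^2/8 - lam/2 \<le> Hquot lam (v x) (u x)"
    using Hquot_ge_far[of "u x" "dH_crit lam" "v x" lam] u_bounded[OF x] r_less h \<open>v x - u x = h\<close>
    by simp
  ultimately show "m * h^2 * ((h - 2 * dH_crit lam)^2/8 - lam/2) \<le> excess v x"
    using m theta_pos[OF x] \<open>lam \<le> (h - 2 * dH_crit lam)^2/4\<close>
    by (simp add: mult.assoc mult_mono mult_left_mono)
qed

lemma tall_bump_increases_K:
  obtains h where "0 < h"
    "\<And>c d. 0 < d \<Longrightarrow> a \<le> c - 2 * d \<Longrightarrow> c + 2 * d \<le> b \<Longrightarrow> K u < K (\<lambda>x. u x + h * bump c d x)"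
proof -
  obtain m M where m: "0 < m" "\<And>x. x \<in> {a..b} \<Longrightarrow> m \<le> \<theta> x \<and> \<theta> x \<le> M"
    using theta_bounds by blast
  have "m \<le> M"
    using m(2)[of a] a_less_b by auto
  then obtain h where h: "2 * dH_crit lam < h" "lam \<le> (h - 2 * dH_crit lam)^2/4"
    and gain: "M * lam < m * ((h - 2 * dH_crit lam)^2/8 - lam/2)"
    using tall_height_exists[OF m(1) _ lam_pos, of M "dH_crit lam"] dH_crit_pos[OF lam_pos] by auto
  have "0 < h"
    using h(1) dH_crit_pos[OF lam_pos] by linarith
  moreover have "K u < K (\<lambda>x. u x + h * bump c d x)"
    if d: "0 < d" "a \<le> c - 2 * d" "c + 2 * d \<le> b" for c d
  proof -
    let ?v = "\<lambda>x. u x + h * bump c d x" and ?q = "(h - 2 * dH_crit lam)^2/8 - lam/2"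
    have v_cont: "continuous_on {a..b} ?v"
      using u_cont d(1) by (intro continuous_intros continuous_on_bump)
    have "0 < 2 * d * h^2 * (m * ?q - M * lam)"
      using gain d(1) \<open>0 < h\<close> by simp
    also have "\<dots> = 2 * d * (m * h^2 * ?q - 2 * (M * h^2 * lam/2))"
      by (simp add: algebra_simps)
    also have "\<dots> \<le> integral {a..b} (excess ?v)"
    proof (rule integral_ge_on_plateau[OF excess_integrable[OF v_cont]])
      fix x assume x: "x \<in> {a..b}"
      have "m \<le> \<theta> x" "\<theta> x \<le> M"
        using m(2)[OF x] by auto
      note bounds = tall_bump_excess_bounds[OF x d(1) less_imp_le[OF h(1)] this, where c = c]
      show "- (M * h^2 * lam/2) \<le> excess ?v x" "2 * d \<le> \<bar>x - c\<bar> \<Longrightarrow> 0 \<le> excess ?v x"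
        using bounds(1,2) by simp_all
      show "\<bar>x - c\<bar> \<le> d \<Longrightarrow> m * h^2 * ?q \<le> excess ?v x"
        using bounds(3) h(2) by simp
    qed (use d lam_pos m(1) \<open>m \<le> M\<close> in auto)
    also have "\<dots> = K ?v - K u"
      using K_diff[OF v_cont] by simp
    finally show ?thesis
      by simp
  qed
  ultimately show ?thesis
    using that by blast
qed

lemma not_local_max_lpnorm:
  assumes p: "0 < p"
  shows "\<not> local_max_wrt (C0 a b) (lpnorm a b p) K u"
proof
  assume "local_max_wrt (C0 a b) (lpnorm a b p) K u"
  then obtain e where e: "0 < e"
    and max: "\<And>v. v \<in> C0 a b \<Longrightarrow> lpnorm a b p (\<lambda>x. v x - u x) < e \<Longrightarrow> K v \<le> K u"
    unfolding local_max_wrt_def by blast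
  obtain h where h: "0 < h"
    and increases: "\<And>c d. 0 < d \<Longrightarrow> a \<le> c - 2 * d \<Longrightarrow> c + 2 * d \<le> b \<Longrightarrow> K u < K (\<lambda>x. u x + h * bump c d x)"
    using tall_bump_increases_K by blast
  define d where "d = min ((b - a) / 8) ((e / (2 * h)) powr p / 4)"
  have d: "0 < d" "a \<le> (a + b)/2 - 2 * d" "(a + b)/2 + 2 * d \<le> b"
    using a_less_b e h unfolding d_def by (auto simp: min_def field_simps)
  have "(4 * d) powr (1/p) \<le> ((e / (2 * h)) powr p) powr (1/p)"
    using d(1) p unfolding d_def by (intro powr_mono2) auto
  also have "\<dots> = e / (2 * h)"
    using p e h by (simp add: powr_powr)
  finally have "h * (4 * d) powr (1/p) < e"
    using e h by (simp add: field_simps)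
  let ?v = "\<lambda>x. u x + h * bump ((a + b)/2) d x"
  have "lpnorm a b p (\<lambda>x. ?v x - u x) < e"
    using bump_perturbation(2)[OF d _ p u_C0, of h] h \<open>h * (4 * d) powr (1/p) < e\<close> by simp
  then have "K ?v \<le> K u"
    using max[OF bump_perturbation(1)[OF d _ p u_C0]] h by simp
  with increases[OF d] show False
    by simp
qed

end

theorem proposition3:
  fixes a b lam :: real and \<theta> F :: "real \<Rightarrow> real"
  assumes ab: "a < b" and lam: "lam > 0"
    and \<theta>_cont: "continuous_on {a..b} \<theta>"
    and \<theta>_pos: "\<forall>x\<in>{a..b}. \<theta> x > 0"
    and F_C1: "\<exists>F'. continuous_on {a..b} F' \<and>
                 (\<forall>x\<in>{a..b}. (F has_real_derivative F' x) (at x within {a..b}))"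
    and Fa: "F a = 0" and Fb: "F b = 0"
    and F_nz: "\<forall>x\<in>{a<..<b}. F x \<noteq> 0"
    and F_small: "supnorm a b F < (2*lam/3) powr (3/2)"
  shows "local_max_wrt (C0 a b) (supnorm a b) (Kfun a b lam \<theta> F) (\<lambda>x. z2 lam (F x))
       \<and> (\<forall>p. 1 \<le> p \<and> p < 4 \<longrightarrow>
            \<not> local_min_wrt (C0 a b) (lpnorm a b p) (Kfun a b lam \<theta> F) (\<lambda>x. z2 lam (F x)) \<and>
            \<not> local_max_wrt (C0 a b) (lpnorm a b p) (Kfun a b lam \<theta> F) (\<lambda>x. z2 lam (F x)))"
proof -
  obtain F' where "\<forall>x\<in>{a..b}. (F has_real_derivative F' x) (at x within {a..b})"
    using F_C1 by blast
  then have F_cont: "continuous_on {a..b} F"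
    unfolding continuous_on_eq_continuous_within using DERIV_continuous by blast
  have F_bound: "\<bar>F x\<bar> < dH_crit lam ^ 3" if "x \<in> {a..b}" for x
    using abs_le_supnorm[OF F_cont that] F_small powr_three_halves[of "2*lam/3"] lam
    unfolding dH_crit_def by simp
  define u where "u = (\<lambda>x. z2 lam (F x))"
  have u_solves: "\<bar>u x\<bar> < dH_crit lam" "dH lam (u x) = F x" if "x \<in> {a..b}" for x
    using z2_solves[OF lam F_bound[OF that]] unfolding u_def by auto
  have "continuous_on (F ` {a..b}) (z2 lam)"
    using isCont_z2[OF lam F_bound] by (intro continuous_at_imp_continuous_on) auto
  then have u_cont: "continuous_on {a..b} u"
    unfolding u_def using F_cont by (rule continuous_on_compose2) auto
  have "z2 lam 0 = 0"
    using z2_dH[OF lam, of 0] dH_crit_pos[OF lam] by (simp add: dH_def)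
  then have u_C0: "u \<in> C0 a b"
    unfolding C0_def using u_cont Fa Fb by (simp add: u_def)
  obtain x0 where "x0 \<in> {a..b}" and x0_max: "\<forall>x\<in>{a..b}. \<bar>u x\<bar> \<le> \<bar>u x0\<bar>"
    using continuous_attains_sup[of "{a..b}" "\<lambda>x. \<bar>u x\<bar>"] continuous_on_rabs[OF u_cont] ab
    by auto
  interpret stationary_point a b lam "\<bar>u x0\<bar>" \<theta> F u
    using ab lam \<theta>_cont \<theta>_pos F_cont u_C0 u_solves x0_max \<open>x0 \<in> {a..b}\<close>
    by unfold_locales auto
  show ?thesis
    using local_max_supnorm not_local_min_lpnorm not_local_max_lpnorm unfolding u_def by auto
qed

end
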